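(* Let $\Theta$ be a parameter set, let $B(p,\theta)$ and $L(p,\theta)$ be real-valued functions of a distribution $p$ and a parameter $\theta\in\Theta$, and for each $p$ let $\theta^*(p)\in\arg\min_{\theta\in\Theta}B(p,\theta)$. For $\rho_1,\rho_2\ge 0$ and $\eta\in[0,1)$ define $$\mathcal{G}_{\downarrow}(\rho_1,\eta)=\Big\{p:\ \sup_{r\le \frac{p}{1-\eta}} B(r,\theta^*(p))\le\rho_1\Big\},$$ $$\mathcal{G}_{\uparrow}(\rho_1,\rho_2,\eta)=\Big\{p:\ \text{for all }\theta\in\Theta \text{ and all } r\le\tfrac{p}{1-\eta},\ \big(B(r,\theta)\le\rho_1\Rightarrow L(p,\theta)\le\rho_2\big)\Big\},$$ and $\mathcal{G}^{\mathsf{TV}}(\rho_1,\rho_2,\eta)=\mathcal{G}_{\downarrow}(\rho_1,\eta)\cap\mathcal{G}_{\uparrow}(\rho_1,\rho_2,\eta)$. If $2\epsilon\le\eta<1$, then $$\sup_{p_1,p_2\in\mathcal{G}^{\mathsf{TV}}(\rho_1,\rho_2,\eta):\ \mathsf{TV}(p_1,p_2)\le 2\epsilon} L(p_1,\theta^*(p_2))\le\rho_2 .$$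
   Context: For distributions $r,p$ and $\eta\in[0,1)$, $r\le \frac{p}{1-\eta}$ means $r$ is a probability distribution with $r(A)\le p(A)/(1-\eta)$ for all measurable $A$. $\mathsf{TV}(p,q)=\sup_A|p(A)-q(A)|$. The left-hand side of the conclusion is called the modulus of continuity of $\mathcal{G}^{\mathsf{TV}}(\rho_1,\rho_2,\eta)$ at level $2\epsilon$ under $\mathsf{TV}$ and loss $L$. *)

theory Defs
  imports "HOL-Probability.Probability"
begin

definition dists :: "'a measure \<Rightarrow> 'a measure set" where
  "dists M = {p. prob_space p \<and> sets p = sets M}"

text \<open>r \<le> p/(1-eta): r is a distribution with r(A) \<le> p(A)/(1-eta) for all measurable A.\<close>
definition dom_by :: "'a measure \<Rightarrow> 'a measure \<Rightarrow> 'a measure \<Rightarrow> real \<Rightarrow> bool" where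
  "dom_by M r p \<eta> \<longleftrightarrow> r \<in> dists M \<and>
     (\<forall>A\<in>sets M. measure r A \<le> measure p A / (1 - \<eta>))"

definition TV :: "'a measure \<Rightarrow> 'a measure \<Rightarrow> 'a measure \<Rightarrow> real" where
  "TV M p q = (SUP A\<in>sets M. \<bar>measure p A - measure q A\<bar>)"

definition G_down :: "'a measure \<Rightarrow> ('a measure \<Rightarrow> 'b \<Rightarrow> real) \<Rightarrow> ('a measure \<Rightarrow> 'b)
    \<Rightarrow> real \<Rightarrow> real \<Rightarrow> 'a measure set" where
  "G_down M B \<theta>s \<rho>1 \<eta> =
     {p \<in> dists M. (SUP r\<in>{r. dom_by M r p \<eta>}. ereal (B r (\<theta>s p))) \<le> ereal \<rho>1}"

definition G_up :: "'a measure \<Rightarrow> 'b set \<Rightarrow> ('a measure \<Rightarrow> 'b \<Rightarrow> real) \<Rightarrow> ('a measure \<Rightarrow> 'b \<Rightarrow> real)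
    \<Rightarrow> real \<Rightarrow> real \<Rightarrow> real \<Rightarrow> 'a measure set" where
  "G_up M \<Theta> B L \<rho>1 \<rho>2 \<eta> =
     {p \<in> dists M. \<forall>\<theta>\<in>\<Theta>. \<forall>r. dom_by M r p \<eta> \<longrightarrow> B r \<theta> \<le> \<rho>1 \<longrightarrow> L p \<theta> \<le> \<rho>2}"

definition G_TV :: "'a measure \<Rightarrow> 'b set \<Rightarrow> ('a measure \<Rightarrow> 'b \<Rightarrow> real) \<Rightarrow> ('a measure \<Rightarrow> 'b \<Rightarrow> real)
    \<Rightarrow> ('a measure \<Rightarrow> 'b) \<Rightarrow> real \<Rightarrow> real \<Rightarrow> real \<Rightarrow> 'a measure set" where
  "G_TV M \<Theta> B L \<theta>s \<rho>1 \<rho>2 \<eta> = G_down M B \<theta>s \<rho>1 \<eta> \<inter> G_up M \<Theta> B L \<rho>1 \<rho>2 \<eta>"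

end

theory Submission
  imports Defs
begin

text \<open>
  Two distributions at total variation distance \<open>\<delta> < 1\<close> share a common part of mass at least
  \<open>1 - \<delta>\<close>: on a Hahn set \<open>Y\<close> where \<open>p\<^sub>2 \<le> p\<^sub>1\<close> take \<open>p\<^sub>2\<close>, off \<open>Y\<close> take \<open>p\<^sub>1\<close>.
  Normalised, this overlap is a distribution \<open>r\<close> with \<open>r \<le> p\<^sub>i/(1 - \<delta>)\<close> for both \<open>i\<close>,
  hence \<open>r \<le> p\<^sub>i/(1 - \<eta>)\<close> once \<open>\<delta> \<le> 2\<epsilon> \<le> \<eta>\<close>. Membership of \<open>p\<^sub>2\<close> in \<open>G\<^sub>\<down>\<close> gives
  \<open>B(r, \<theta>\<^sup>*(p\<^sub>2)) \<le> \<rho>\<^sub>1\<close>, and membership of \<open>p\<^sub>1\<close> in \<open>G\<^sub>\<up>\<close> turns this into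
  \<open>L(p\<^sub>1, \<theta>\<^sup>*(p\<^sub>2)) \<le> \<rho>\<^sub>2\<close>. Only \<open>\<theta>\<^sup>*(p) \<in> \<Theta>\<close> is used, not its minimality.
\<close>

definition add_measure :: "'a measure \<Rightarrow> 'a measure \<Rightarrow> 'a measure" where
  "add_measure p q = measure_of (space p) (sets p) (\<lambda>A. emeasure p A + emeasure q A)"

lemma sets_add_measure [simp]: "sets (add_measure p q) = sets p"
  unfolding add_measure_def by (simp add: sets.sigma_sets_eq)

lemma emeasure_add_measure:
  assumes sets_eq: "sets q = sets p" and A: "A \<in> sets p"
  shows "emeasure (add_measure p q) A = emeasure p A + emeasure q A"
  unfolding add_measure_def
proof (rule emeasure_measure_of_sigma[OF sets.sigma_algebra_axioms _ _ A])
  show "positive (sets p) (\<lambda>A. emeasure p A + emeasure q A)"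
    by (simp add: positive_def)
  show "countably_additive (sets p) (\<lambda>A. emeasure p A + emeasure q A)"
    unfolding countably_additive_def
  proof (intro allI impI)
    fix F :: "nat \<Rightarrow> 'a set"
    assume F: "range F \<subseteq> sets p" "disjoint_family F"
    have "(\<Sum>i. emeasure p (F i) + emeasure q (F i)) = (\<Sum>i. emeasure p (F i)) + (\<Sum>i. emeasure q (F i))"
      by (rule suminf_add[OF summableI summableI, symmetric])
    also have "\<dots> = emeasure p (\<Union> (range F)) + emeasure q (\<Union> (range F))"
      using F sets_eq by (simp add: suminf_emeasure)
    finally show "(\<Sum>i. emeasure p (F i) + emeasure q (F i)) =
        emeasure p (\<Union> (range F)) + emeasure q (\<Union> (range F))" .
  qed
qed

lemma exists_overlap_measure:
  assumes p: "finite_measure p" and q: "finite_measure q" and sets_eq: "sets q = sets p"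
  obtains m Y where "sets m = sets p" and "Y \<in> sets p"
    and "\<And>X. X \<in> sets p \<Longrightarrow> emeasure m X \<le> emeasure p X"
    and "\<And>X. X \<in> sets p \<Longrightarrow> emeasure m X \<le> emeasure q X"
    and "emeasure m (space p) = emeasure q Y + emeasure p (space p - Y)"
proof -
  obtain Y where Y: "Y \<in> sets p"
    and q_le_p: "\<And>X. X \<in> sets p \<Longrightarrow> X \<subseteq> Y \<Longrightarrow> emeasure q X \<le> emeasure p X"
    and p_le_q: "\<And>X. X \<in> sets p \<Longrightarrow> X \<inter> Y = {} \<Longrightarrow> emeasure p X \<le> emeasure q X"
    using finite_unsigned_Hahn_decomposition[OF p q sets_eq] by blast
  define m where "m = add_measure (density q (indicator Y)) (density p (indicator (space p - Y)))"
  have sets_m: "sets m = sets p"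
    using sets_eq by (simp add: m_def)
  have m_eq: "emeasure m X = emeasure q (Y \<inter> X) + emeasure p ((space p - Y) \<inter> X)"
    if X: "X \<in> sets p" for X
    using X Y sets_eq by (simp add: m_def emeasure_add_measure emeasure_restricted)
  have split: "emeasure r X = emeasure r (Y \<inter> X) + emeasure r ((space p - Y) \<inter> X)"
    if "sets r = sets p" "X \<in> sets p" for r X
    using that Y sets.sets_into_space[OF that(2)] sets_eq_imp_space_eq[OF that(1)]
    by (subst plus_emeasure) (auto intro!: arg_cong[where f = "emeasure r"])
  show ?thesis
  proof
    fix X assume X: "X \<in> sets p"
    show "emeasure m X \<le> emeasure p X"
      unfolding m_eq[OF X] split[OF refl X] using X Y by (intro add_right_mono q_le_p) auto
    show "emeasure m X \<le> emeasure q X"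
      unfolding m_eq[OF X] split[OF sets_eq X] using X Y by (intro add_left_mono p_le_q) auto
  next
    show "emeasure m (space p) = emeasure q Y + emeasure p (space p - Y)"
      using m_eq[OF sets.top] sets.sets_into_space[OF Y] by (simp add: Int_absorb2 Diff_subset)
  qed (use sets_m Y in auto)
qed

lemma prob_space_scale_measure_inverse_total:
  assumes "finite_measure m" and "0 < measure m (space m)"
  shows "prob_space (scale_measure (1 / measure m (space m)) m)"
proof
  interpret finite_measure m by fact
  show "emeasure (scale_measure (1 / measure m (space m)) m) (space (scale_measure (1 / measure m (space m)) m)) = 1"
    using assms(2) by (simp add: space_scale_measure emeasure_eq_measure ennreal_mult[symmetric])
qed

lemma measure_diff_le_TV:
  assumes "p \<in> dists M" and "q \<in> dists M" and "A \<in> sets M"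
  shows "measure p A - measure q A \<le> TV M p q"
proof -
  interpret p: prob_space p using assms(1) by (simp add: dists_def)
  interpret q: prob_space q using assms(2) by (simp add: dists_def)
  have "bdd_above ((\<lambda>A. \<bar>measure p A - measure q A\<bar>) ` sets M)"
  proof (rule bdd_aboveI2)
    fix X
    show "\<bar>measure p X - measure q X\<bar> \<le> 1"
      using p.prob_le_1[of X] q.prob_le_1[of X] measure_nonneg[of p X] measure_nonneg[of q X]
      by linarith
  qed
  then show ?thesis
    unfolding TV_def using cSUP_upper[OF assms(3)] by fastforce
qed

lemma dom_by_normalized_minorant:
  assumes m: "finite_measure m" and sets_m: "sets m = sets M"
    and m_le: "\<And>X. X \<in> sets M \<Longrightarrow> measure m X \<le> measure p X"
    and mass: "1 - \<delta> \<le> measure m (space m)" and \<delta>_less: "\<delta> < 1"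
  shows "dom_by M (scale_measure (1 / measure m (space m)) m) p \<delta>"
proof -
  define c where "c = measure m (space m)"
  have c_pos: "0 < c"
    using mass \<delta>_less unfolding c_def by linarith
  have "prob_space (scale_measure (1 / c) m)"
    using prob_space_scale_measure_inverse_total[OF m] c_pos unfolding c_def by simp
  moreover have "measure m X / c \<le> measure p X / (1 - \<delta>)" if "X \<in> sets M" for X
    using m_le[OF that] mass \<delta>_less unfolding c_def[symmetric] by (intro frac_le) auto
  ultimately show ?thesis
    using sets_m c_pos unfolding c_def[symmetric] by (simp add: dom_by_def dists_def)
qed

lemma dists_common_dom_by:
  assumes p: "p \<in> dists M" and q: "q \<in> dists M" and TV_less: "TV M p q < 1"
  obtains r where "dom_by M r p (TV M p q)" and "dom_by M r q (TV M p q)"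
proof -
  interpret p: prob_space p using p by (simp add: dists_def)
  interpret q: prob_space q using q by (simp add: dists_def)
  have sets_p: "sets p = sets M" and sets_q: "sets q = sets M"
    using p q by (auto simp: dists_def)
  have space_p: "space p = space M"
    using sets_eq_imp_space_eq[OF sets_p] .
  obtain m Y where sets_m: "sets m = sets p" and Y: "Y \<in> sets p"
    and m_le_p: "\<And>X. X \<in> sets p \<Longrightarrow> emeasure m X \<le> emeasure p X"
    and m_le_q: "\<And>X. X \<in> sets p \<Longrightarrow> emeasure m X \<le> emeasure q X"
    and mass: "emeasure m (space p) = emeasure q Y + emeasure p (space p - Y)"
    using exists_overlap_measure[of p q] sets_p sets_q p.finite_measure_axioms q.finite_measure_axioms
    by metis
  have space_m: "space m = space M"
    using sets_eq_imp_space_eq[OF sets_m] space_p by simp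
  interpret m: finite_measure m
    using m_le_p[OF sets.top] by (intro finite_measureI) (auto simp: space_m space_p top_unique)
  have measure_le: "measure m X \<le> measure p X" "measure m X \<le> measure q X" if "X \<in> sets M" for X
    using m_le_p[of X] m_le_q[of X] that sets_p
    by (simp_all add: m.emeasure_eq_measure p.emeasure_eq_measure q.emeasure_eq_measure)
  have "measure m (space m) = measure q Y + measure p (space p - Y)"
    using mass unfolding space_m space_p[symmetric]
    by (simp add: m.emeasure_eq_measure p.emeasure_eq_measure q.emeasure_eq_measure
        ennreal_plus[symmetric] del: ennreal_plus)
  also have "measure p (space p - Y) = 1 - measure p Y"
    using p.prob_compl[OF Y] .
  finally have "1 - TV M p q \<le> measure m (space m)"
    using measure_diff_le_TV[OF p q] Y sets_p by fastforce
  then show ?thesis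
    using that dom_by_normalized_minorant[OF m.finite_measure_axioms] sets_m sets_p measure_le TV_less
    by metis
qed

lemma dom_by_mono:
  assumes "dom_by M r p \<eta>" and "\<eta> \<le> \<eta>'" and "\<eta>' < 1"
  shows "dom_by M r p \<eta>'"
proof -
  have "measure p A / (1 - \<eta>) \<le> measure p A / (1 - \<eta>')" for A
    using assms(2,3) by (intro divide_left_mono) auto
  with assms(1) show ?thesis
    unfolding dom_by_def by (meson order.trans)
qed

lemma G_down_bound:
  assumes "p \<in> G_down M B \<theta>s \<rho>1 \<eta>" and "dom_by M r p \<eta>"
  shows "B r (\<theta>s p) \<le> \<rho>1"
proof -
  have "ereal (B r (\<theta>s p)) \<le> (SUP r\<in>{r. dom_by M r p \<eta>}. ereal (B r (\<theta>s p)))"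
    using assms(2) by (intro SUP_upper) auto
  also have "\<dots> \<le> ereal \<rho>1"
    using assms(1) by (simp add: G_down_def)
  finally show ?thesis by simp
qed

lemma G_TV_common_dom_by_bound:
  assumes p1: "p1 \<in> G_TV M \<Theta> B L \<theta>s \<rho>1 \<rho>2 \<eta>" and p2: "p2 \<in> G_TV M \<Theta> B L \<theta>s \<rho>1 \<rho>2 \<eta>"
    and "\<theta>s p2 \<in> \<Theta>" and "dom_by M r p1 \<eta>" and "dom_by M r p2 \<eta>"
  shows "L p1 (\<theta>s p2) \<le> \<rho>2"
proof -
  have "B r (\<theta>s p2) \<le> \<rho>1"
    using p2 assms(5) by (intro G_down_bound) (auto simp: G_TV_def)
  with p1 assms(3,4) show ?thesis
    by (auto simp: G_TV_def G_up_def)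
qed

theorem theorem3p3:
  fixes M :: "'a measure" and \<Theta> :: "'b set"
    and B L :: "'a measure \<Rightarrow> 'b \<Rightarrow> real" and \<theta>s :: "'a measure \<Rightarrow> 'b"
    and \<rho>1 \<rho>2 \<eta> \<epsilon> :: real
  assumes argmin: "\<And>p. p \<in> dists M \<Longrightarrow> \<theta>s p \<in> \<Theta> \<and> (\<forall>\<theta>\<in>\<Theta>. B p (\<theta>s p) \<le> B p \<theta>)"
    and "\<rho>1 \<ge> 0" and "\<rho>2 \<ge> 0" and "0 \<le> \<eta>"
    and "2 * \<epsilon> \<le> \<eta>" and "\<eta> < 1"
  shows "(SUP pp\<in>{(p1, p2). p1 \<in> G_TV M \<Theta> B L \<theta>s \<rho>1 \<rho>2 \<eta> \<and> p2 \<in> G_TV M \<Theta> B L \<theta>s \<rho>1 \<rho>2 \<eta>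
              \<and> TV M p1 p2 \<le> 2 * \<epsilon>}. ereal (L (fst pp) (\<theta>s (snd pp)))) \<le> ereal \<rho>2"
proof (rule SUP_least, clarsimp)
  fix p1 p2
  assume G1: "p1 \<in> G_TV M \<Theta> B L \<theta>s \<rho>1 \<rho>2 \<eta>" and G2: "p2 \<in> G_TV M \<Theta> B L \<theta>s \<rho>1 \<rho>2 \<eta>"
    and TV_le: "TV M p1 p2 \<le> 2 * \<epsilon>"
  have p1: "p1 \<in> dists M" and p2: "p2 \<in> dists M"
    using G1 G2 by (auto simp: G_TV_def G_up_def)
  have TV_le_\<eta>: "TV M p1 p2 \<le> \<eta>"
    using TV_le assms(5) by linarith
  obtain r where "dom_by M r p1 (TV M p1 p2)" and "dom_by M r p2 (TV M p1 p2)"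
    using dists_common_dom_by[OF p1 p2] TV_le_\<eta> \<open>\<eta> < 1\<close> by force
  then have "dom_by M r p1 \<eta>" and "dom_by M r p2 \<eta>"
    using TV_le_\<eta> \<open>\<eta> < 1\<close> by (auto intro: dom_by_mono)
  then show "L p1 (\<theta>s p2) \<le> \<rho>2"
    using G_TV_common_dom_by_bound[OF G1 G2] argmin[OF p2] by blast
qed

end
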